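(* Let $q=2^m$ with $m\ge 2$, and let $k$ be an integer with $1\le k\le q+1$ such that $\mathcal C_{\{3,5\}}^\perp|_{\mathrm{GF}(q)}$ contains a codeword of weight $k$. Then $\mathcal B_k(\mathcal C_{\{3,5\}}^\perp|_{\mathrm{GF}(q)})$ is invariant under the action of $\mathrm{Stab}_{U_{q+1}}$. In particular, if $k>3$, the incidence structure $(U_{q+1},\mathcal B_k(\mathcal C_{\{3,5\}}^\perp|_{\mathrm{GF}(q)}))$ is a $3$-design.
   Context: $U_{q+1}$ is the set of $(q+1)$-th roots of unity in $\mathrm{GF}(q^2)$, viewed as a subset of $\mathrm{PG}(1,q^2)=\mathrm{GF}(q^2)\cup\{\infty\}$; coordinates are indexed by $U_{q+1}$. $\mathrm{Stab}_{U_{q+1}}$ is the setwise stabilizer of $U_{q+1}$ in $\mathrm{PGL}_2(\mathrm{GF}(q^2))$ acting by linear fractional transformations. $\mathcal C_{\{3,5\}}=\{(a_3u^3+a_{q-2}u^{q-2}+a_5u^5+a_{q-4}u^{q-4})_{u\in U_{q+1}}: a_i\in\mathrm{GF}(q^2)\}$, $\mathcal C_{\{3,5\}}^\perp$ its dual under the standard inner product, and $\mathcal C^\perp_{\{3,5\}}|_{\mathrm{GF}(q)}=\mathcal C^\perp_{\{3,5\}}\cap\mathrm{GF}(q)^{q+1}$. $\mathcal B_k(\mathcal C)$ is the set of supports of codewords of Hamming weight $k$; invariance means $\pi(B)\in\mathcal B_k$ for all blocks $B$ and all $\pi\in \mathrm{Stab}_{U_{q+1}}$. A $3$-design: every $3$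 points lie in the same positive number of blocks. *)

theory Defs
  imports Main
begin

text \<open>The field GF(q^2) is modelled by an arbitrary finite field type 'a with
  CARD('a) = q^2. Vectors indexed by U_{q+1} are functions 'a => 'a that vanish
  outside U_{q+1}.\<close>

definition Uroots :: "nat \<Rightarrow> 'a::field set" where
  "Uroots q = {u. u ^ (q + 1) = 1}"

definition subGF :: "nat \<Rightarrow> 'a::field set" where
  "subGF q = {x. x ^ q = x}"

definition vecs :: "nat \<Rightarrow> ('a::field \<Rightarrow> 'a) set" where
  "vecs q = {v. \<forall>u. u \<notin> Uroots q \<longrightarrow> v u = 0}"

definition C35 :: "nat \<Rightarrow> ('a::field \<Rightarrow> 'a) set" where
  "C35 q = {c \<in> vecs q. \<exists>a3 a5 b3 b5. \<forall>u \<in> Uroots q.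
      c u = a3 * u ^ 3 + b3 * u ^ (q - 2) + a5 * u ^ 5 + b5 * u ^ (q - 4)}"

definition dual_code :: "nat \<Rightarrow> ('a::field \<Rightarrow> 'a) set \<Rightarrow> ('a \<Rightarrow> 'a) set" where
  "dual_code q C = {v \<in> vecs q. \<forall>c \<in> C. (\<Sum>u \<in> Uroots q. v u * c u) = 0}"

definition subfield_subcode :: "nat \<Rightarrow> ('a::field \<Rightarrow> 'a) set \<Rightarrow> ('a \<Rightarrow> 'a) set" where
  "subfield_subcode q C = {v \<in> C. \<forall>u \<in> Uroots q. v u \<in> subGF q}"

definition supp :: "nat \<Rightarrow> ('a::field \<Rightarrow> 'a) \<Rightarrow> 'a set" where
  "supp q v = {u \<in> Uroots q. v u \<noteq> 0}"

definition wt :: "nat \<Rightarrow> ('a::field \<Rightarrow> 'a) \<Rightarrow> nat" where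
  "wt q v = card (supp q v)"

definition blocks :: "nat \<Rightarrow> nat \<Rightarrow> ('a::field \<Rightarrow> 'a) set \<Rightarrow> 'a set set" where
  "blocks q k C = {supp q v | v. v \<in> C \<and> wt q v = k}"

text \<open>Projective line PG(1,F) = F \<union> {\<infinity>}, with None = \<infinity>.
  Linear fractional transformation z \<mapsto> (a z + b)/(c z + d), ad - bc \<noteq> 0.\<close>

definition mobius :: "'a::field \<Rightarrow> 'a \<Rightarrow> 'a \<Rightarrow> 'a \<Rightarrow> 'a option \<Rightarrow> 'a option" where
  "mobius a b c d z = (case z of
      None \<Rightarrow> (if c = 0 then None else Some (a / c))
    | Some x \<Rightarrow> (if c * x + d = 0 then None else Some ((a * x + b) / (c * x + d))))"

definition PGL2 :: "('a::field option \<Rightarrow> 'a option) set" where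
  "PGL2 = {mobius a b c d | a b c d. a * d - b * c \<noteq> 0}"

definition Stab :: "nat \<Rightarrow> ('a::field option \<Rightarrow> 'a option) set" where
  "Stab q = {\<pi> \<in> PGL2. \<pi> ` (Some ` Uroots q) = Some ` Uroots q}"

definition act :: "('a option \<Rightarrow> 'a option) \<Rightarrow> 'a set \<Rightarrow> 'a set" where
  "act \<pi> B = {y. Some y \<in> \<pi> ` (Some ` B)}"

definition invariant :: "nat \<Rightarrow> 'a::field set set \<Rightarrow> bool" where
  "invariant q \<B> = (\<forall>B \<in> \<B>. \<forall>\<pi> \<in> Stab q. act \<pi> B \<in> \<B>)"

definition is_t_design :: "nat \<Rightarrow> 'a set \<Rightarrow> 'a set set \<Rightarrow> bool" where
  "is_t_design t P \<B> = ((\<forall>B \<in> \<B>. B \<subseteq> P) \<and>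
     (\<exists>lam::nat. lam > 0 \<and> (\<forall>T \<subseteq> P. card T = t \<longrightarrow> card {B \<in> \<B>. T \<subseteq> B} = lam)))"

end

(*
  Write U for U_{q+1} and N x = x^(q+1) for the norm to GF(q). An element of the stabiliser maps
  u in U to (a u + b) / (c u + d); comparing norms of numerator and denominator gives a quadratic
  in u vanishing on the q + 1 > 2 points of U, which forces c = mu b^q and d = mu a^q, i.e.
  g u = (a u + b) / (mu u (a u + b)^q). The multiplier rho u = N (a u + b)^5 is GF(q)-valued,
  and rho u * (g u)^j for j = 3, 5 is a combination of u^3, u^5, u^(-3), u^(-5) on U, hence a
  codeword of C_{3,5}. Therefore v' with v' (g u) = rho u * v u is again in the subfield subcode of
  the dual (the conditions for the exponents -3, -5 are Frobenius conjugates of those for 3, 5),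
  and its support is the image of the support of v: the blocks are permuted by the stabiliser.
  The stabiliser is 3-transitive on U, since the cross ratio maps U minus a point into GF(q);
  so an invariant family of blocks of size at least 3 is a 3-design.
*)
theory Submission
  imports Defs "HOL-Computational_Algebra.Polynomial" "HOL-Computational_Algebra.Primes"
begin

section \<open>Finite fields\<close>

lemma of_nat_card_UNIV_eq_0: "of_nat (card (UNIV :: 'a::{ring_1,finite} set)) = (0::'a)"
proof -
  have "(\<Sum>y\<in>UNIV. y + 1) = (\<Sum>y::'a\<in>UNIV. y)"
    by (rule sum.reindex_bij_witness[of _ "\<lambda>y. y - 1" "\<lambda>y. y + 1"]) auto
  then show ?thesis
    by (simp add: sum.distrib)
qed

(* The library's finite_field_power_card_eq_same needs the sort finite_field. *)
lemma power_card_UNIV_minus_1_eq_1: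
  fixes x :: "'a::{field,finite}"
  assumes "x \<noteq> 0"
  shows "x ^ (card (UNIV :: 'a set) - 1) = 1"
proof -
  have "(\<Prod>y\<in>UNIV-{0}. x * y) = (\<Prod>y::'a\<in>UNIV-{0}. y)"
    by (rule prod.reindex_bij_witness[of _ "\<lambda>y. y / x" "\<lambda>y. x * y"]) (use assms in auto)
  then have "x ^ card (UNIV - {0::'a}) = 1"
    by (simp add: prod.distrib)
  then show ?thesis
    by (simp add: card_Diff_singleton)
qed

lemma CHAR_eq_2_if_card_UNIV_power_2:
  assumes "card (UNIV :: 'a::{field,finite} set) = 2 ^ n"
  shows "CHAR('a) = 2"
proof -
  have "(of_nat 2 :: 'a) ^ n = 0"
    using of_nat_card_UNIV_eq_0[where 'a='a] assms by (simp only: of_nat_power)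
  then have "CHAR('a) dvd 2"
    by (simp only: of_nat_eq_0_iff_char_dvd[symmetric] power_eq_0_iff)
  then show ?thesis
    using CHAR_not_1 two_is_prime_nat prime_nat_iff by (metis One_nat_def)
qed

lemma quadratic_eq_0_on_3_points:
  fixes \<alpha> \<beta> \<gamma> :: "'a::field"
  assumes "finite S" "card S \<ge> 3" and "\<forall>x\<in>S. \<alpha> * x ^ 2 + \<beta> * x + \<gamma> = 0"
  shows "\<alpha> = 0 \<and> \<beta> = 0 \<and> \<gamma> = 0"
proof -
  define p where "p = [:\<gamma>, \<beta>, \<alpha>:]"
  have "p = 0"
  proof (rule ccontr)
    assume "p \<noteq> 0"
    have "S \<subseteq> {x. poly p x = 0}"
      using assms(3) by (auto simp: p_def power2_eq_square algebra_simps)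
    then have "card S \<le> card {x. poly p x = 0}"
      using poly_roots_finite[OF \<open>p \<noteq> 0\<close>] by (intro card_mono) auto
    also have "\<dots> \<le> degree p"
      using card_poly_roots_bound[OF \<open>p \<noteq> 0\<close>] .
    also have "\<dots> \<le> 2"
      unfolding p_def using degree_pCons_le[of \<gamma> "[:\<beta>, \<alpha>:]"] by simp
    finally show False
      using assms(2) by simp
  qed
  then show ?thesis
    by (simp add: p_def)
qed

lemma card_power_eq_le:
  fixes u :: "'a::field"
  assumes "n > 0"
  shows "card {x. x ^ n = u} \<le> n"
proof -
  define p where "p = monom 1 n - [:u:]"
  have "coeff p n = 1"
    using assms by (simp add: p_def coeff_pCons split: nat.split)
  then have "p \<noteq> 0"
    by auto
  have "degree p \<le> n"
    unfolding p_def by (intro degree_diff_le degree_monom_le) simp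
  moreover have "{x. x ^ n = u} = {x. poly p x = 0}"
    by (simp add: p_def poly_monom)
  ultimately show ?thesis
    using card_poly_roots_bound[OF \<open>p \<noteq> 0\<close>] by simp
qed

section \<open>Designs from homogeneous actions\<close>

lemma card_blocks_containing_le_image:
  assumes "finite P" "\<forall>B\<in>\<B>. B \<subseteq> P" "inj_on g P" "\<forall>B\<in>\<B>. g ` B \<in> \<B>"
  shows "card {B\<in>\<B>. T \<subseteq> B} \<le> card {B\<in>\<B>. g ` T \<subseteq> B}"
proof (rule card_inj_on_le)
  show "inj_on (image g) {B\<in>\<B>. T \<subseteq> B}"
  proof (rule inj_onI)
    fix A B assume "A \<in> {B\<in>\<B>. T \<subseteq> B}" "B \<in> {B\<in>\<B>. T \<subseteq> B}" "g ` A = g ` B"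
    then show "A = B"
      using inj_on_image_eq_iff[OF assms(3)] assms(2) by blast
  qed
  show "image g ` {B\<in>\<B>. T \<subseteq> B} \<subseteq> {B\<in>\<B>. g ` T \<subseteq> B}"
    using assms(4) by blast
  have "{B\<in>\<B>. g ` T \<subseteq> B} \<subseteq> Pow P"
    using assms(2) by blast
  then show "finite {B\<in>\<B>. g ` T \<subseteq> B}"
    using assms(1) by (simp add: finite_subset)
qed

lemma is_t_design_if_t_homogeneous:
  assumes "finite P" "\<forall>B\<in>\<B>. B \<subseteq> P" "B\<^sub>0 \<in> \<B>" "t \<le> card B\<^sub>0"
    and homogeneous: "\<And>T T'. T \<subseteq> P \<Longrightarrow> T' \<subseteq> P \<Longrightarrow> card T = t \<Longrightarrow> card T' = t \<Longrightarrow>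
      \<exists>g. inj_on g P \<and> (\<forall>B\<in>\<B>. g ` B \<in> \<B>) \<and> g ` T = T'"
  shows "is_t_design t P \<B>"
proof -
  obtain T\<^sub>0 where T\<^sub>0: "T\<^sub>0 \<subseteq> B\<^sub>0" "card T\<^sub>0 = t"
    using obtain_subset_with_card_n[OF assms(4)] by blast
  have "T\<^sub>0 \<subseteq> P"
    using T\<^sub>0 assms(2,3) by blast
  have le: "card {B\<in>\<B>. T \<subseteq> B} \<le> card {B\<in>\<B>. T' \<subseteq> B}"
    if "T \<subseteq> P" "T' \<subseteq> P" "card T = t" "card T' = t" for T T'
    using homogeneous[OF that] card_blocks_containing_le_image[OF assms(1,2)] by blast
  have "card {B\<in>\<B>. T\<^sub>0 \<subseteq> B} > 0"
    using assms(1-3) T\<^sub>0 by (subst card_gt_0_iff) (auto intro: finite_subset[of _ "Pow P"])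
  moreover have "card {B\<in>\<B>. T \<subseteq> B} = card {B\<in>\<B>. T\<^sub>0 \<subseteq> B}"
    if "T \<subseteq> P" "card T = t" for T
    using le[OF that(1) \<open>T\<^sub>0 \<subseteq> P\<close> that(2) T\<^sub>0(2)] le[OF \<open>T\<^sub>0 \<subseteq> P\<close> that(1) T\<^sub>0(2) that(2)]
    by simp
  ultimately show ?thesis
    unfolding is_t_design_def using assms(2) by blast
qed

section \<open>Linear fractional maps\<close>

lemma obtain_restriction_to_Some_image:
  assumes "\<pi> ` Some ` S = Some ` S" "finite S"
  obtains g where "bij_betw g S S" "\<forall>u\<in>S. \<pi> (Some u) = Some (g u)"
proof -
  define g where "g u = the (\<pi> (Some u))" for u
  have \<pi>_Some: "\<pi> (Some u) = Some (g u)" if "u \<in> S" for u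
  proof -
    have "\<pi> (Some u) \<in> Some ` S"
      using that assms(1) by (metis imageI)
    then show ?thesis
      by (auto simp: g_def)
  qed
  have "Some ` g ` S = \<pi> ` Some ` S"
    unfolding image_image using \<pi>_Some by (intro image_cong) auto
  then have "g ` S = S"
    using assms(1) by (simp add: inj_image_eq_iff)
  then have "bij_betw g S S"
    using assms(2) by (simp add: bij_betw_def eq_card_imp_inj_on)
  then show ?thesis
    using that \<pi>_Some by blast
qed

lemma act_eq_image:
  assumes "\<forall>u\<in>B. \<pi> (Some u) = Some (g u)"
  shows "act \<pi> B = g ` B"
proof -
  have "\<pi> ` Some ` B = Some ` g ` B"
    unfolding image_image using assms by (intro image_cong) auto
  then show ?thesis
    unfolding act_def by auto
qed

lemma mobius_image_Some_image:
  fixes a b c d :: "'a::field"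
  assumes "a * d - b * c \<noteq> 0" "finite S"
    and "\<forall>z\<in>S. c * z + d \<noteq> 0 \<and> (a * z + b) / (c * z + d) \<in> S"
  shows "mobius a b c d ` Some ` S = Some ` S"
proof -
  define F where "F z = (a * z + b) / (c * z + d)" for z
  have "inj_on F S"
  proof (rule inj_onI)
    fix z w assume "z \<in> S" "w \<in> S" "F z = F w"
    then have "(a * z + b) * (c * w + d) - (a * w + b) * (c * z + d) = 0"
      using assms(3) by (simp add: F_def frac_eq_eq)
    also have "(a * z + b) * (c * w + d) - (a * w + b) * (c * z + d) = (a * d - b * c) * (z - w)"
      by (simp add: algebra_simps)
    finally show "z = w"
      using assms(1) by simp
  qed
  then have "F ` S = S"
    using assms(2,3) by (intro endo_inj_surj) (auto simp: F_def)
  moreover have "mobius a b c d ` Some ` S = Some ` F ` S"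
    unfolding image_image using assms(3) by (intro image_cong) (auto simp: mobius_def F_def)
  ultimately show ?thesis
    by simp
qed

section \<open>The code and its dual\<close>

lemma mem_C35_if_eq_on_Uroots:
  fixes f :: "'a::field \<Rightarrow> 'a"
  assumes "\<forall>u\<in>Uroots q. f u = a3 * u ^ 3 + b3 * u ^ (q - 2) + a5 * u ^ 5 + b5 * u ^ (q - 4)"
  shows "(\<lambda>u. if u \<in> Uroots q then f u else 0) \<in> C35 q"
  using assms unfolding C35_def vecs_def by auto

lemma mem_dual_C35I:
  fixes v :: "'a::field \<Rightarrow> 'a"
  assumes "v \<in> vecs q" and "\<forall>j\<in>{3, q - 2, 5, q - 4}. (\<Sum>u\<in>Uroots q. v u * u ^ j) = 0"
  shows "v \<in> dual_code q (C35 q)"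
  unfolding dual_code_def
proof (intro CollectI conjI ballI assms(1))
  fix c :: "'a \<Rightarrow> 'a" assume "c \<in> C35 q"
  then obtain a3 a5 b3 b5 where c: "\<forall>u\<in>Uroots q.
      c u = a3 * u ^ 3 + b3 * u ^ (q - 2) + a5 * u ^ 5 + b5 * u ^ (q - 4)"
    unfolding C35_def by blast
  have "(\<Sum>u\<in>Uroots q. v u * c u) = a3 * (\<Sum>u\<in>Uroots q. v u * u ^ 3)
      + b3 * (\<Sum>u\<in>Uroots q. v u * u ^ (q - 2)) + a5 * (\<Sum>u\<in>Uroots q. v u * u ^ 5)
      + b5 * (\<Sum>u\<in>Uroots q. v u * u ^ (q - 4))"
    using c by (simp add: sum.distrib sum_distrib_left algebra_simps)
  then show "(\<Sum>u\<in>Uroots q. v u * c u) = 0"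
    using assms(2) by simp
qed

definition transport :: "nat \<Rightarrow> ('a \<Rightarrow> 'a) \<Rightarrow> ('a \<Rightarrow> 'a) \<Rightarrow> ('a::field \<Rightarrow> 'a) \<Rightarrow> 'a \<Rightarrow> 'a" where
  "transport q g \<rho> v y =
    (if y \<in> Uroots q then \<rho> (inv_into (Uroots q) g y) * v (inv_into (Uroots q) g y) else 0)"

lemma transport_image:
  assumes "bij_betw g (Uroots q) (Uroots q)" "u \<in> Uroots q"
  shows "transport q g \<rho> v (g u) = \<rho> u * v u"
  using assms by (auto simp: transport_def bij_betw_def)

lemma supp_transport:
  assumes g: "bij_betw g (Uroots q) (Uroots q)" and "\<forall>u\<in>Uroots q. \<rho> u \<noteq> 0"
  shows "supp q (transport q g \<rho> v) = g ` supp q v"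
proof (intro equalityI subsetI)
  fix y assume y: "y \<in> supp q (transport q g \<rho> v)"
  then have "inv_into (Uroots q) g y \<in> supp q v"
    using g by (auto simp: supp_def transport_def bij_betw_def inv_into_into)
  moreover have "g (inv_into (Uroots q) g y) = y"
    using y by (intro bij_betw_inv_into_right[OF g]) (simp add: supp_def)
  ultimately show "y \<in> g ` supp q v"
    by (metis imageI)
next
  fix y assume "y \<in> g ` supp q v"
  then show "y \<in> supp q (transport q g \<rho> v)"
    using assms transport_image[OF g] by (auto simp: supp_def bij_betw_def)
qed

section \<open>Fields of order \<open>q\<^sup>2\<close> with \<open>q = 2 ^ m\<close>\<close>

context
  fixes m q :: nat
  assumes m_ge_2: "m \<ge> 2" and q_def: "q = 2 ^ m"
    and card_UNIV: "card (UNIV :: 'a::{field,finite} set) = q ^ 2"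
begin

lemma q_ge_4: "q \<ge> 4"
  using power_increasing[OF m_ge_2, of "2::nat"] q_def by simp

lemma CHAR_eq_2: "CHAR('a) = 2"
  using card_UNIV q_def by (intro CHAR_eq_2_if_card_UNIV_power_2) (simp add: power_mult[symmetric])

lemma two_eq_0: "(2::'a) = 0"
  using of_nat_CHAR[where 'a='a] by (simp add: CHAR_eq_2)

lemma add_self_eq_0 [simp]: "(x::'a) + x = 0"
  using uminus_CHAR_2[OF CHAR_eq_2, of x] by (metis add.right_inverse)

lemma add_eq_0_iff_eq: "(x::'a) + y = 0 \<longleftrightarrow> x = y"
  using uminus_CHAR_2[OF CHAR_eq_2] by (metis add_eq_0_iff2)

lemma power_2_power_add: "((x::'a) + y) ^ (2 ^ n) = x ^ (2 ^ n) + y ^ (2 ^ n)"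
  using CHAR_eq_2 by (intro freshmans_dream') simp_all

lemma power_q_add: "((x::'a) + y) ^ q = x ^ q + y ^ q"
  unfolding q_def by (rule power_2_power_add)

lemma power_q_sum: "(sum f A :: 'a) ^ q = (\<Sum>x\<in>A. f x ^ q)"
  using CHAR_eq_2 q_def by (intro freshmans_dream_sum') simp_all

lemma power_q_power_q [simp]: "((x::'a) ^ q) ^ q = x"
proof (cases "x = 0")
  case False
  have "q * q = (card (UNIV :: 'a set) - 1) + 1"
    using card_UNIV q_ge_4 by (simp add: power2_eq_square)
  then show ?thesis
    using power_card_UNIV_minus_1_eq_1[OF False] by (simp add: power_mult[symmetric] power_add)
qed (use q_ge_4 in simp)

lemma Uroots_nonzero: "(u::'a) \<in> Uroots q \<Longrightarrow> u \<noteq> 0"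
  by (auto simp: Uroots_def)

lemma power_q_Uroots: "(u::'a) \<in> Uroots q \<Longrightarrow> u ^ q = 1 / u"
  using Uroots_nonzero by (auto simp: Uroots_def field_simps)

lemma power_q_norm: "((x::'a) ^ (q + 1)) ^ q = x ^ (q + 1)"
  by (simp add: power_add power_mult_distrib mult.commute)

lemma card_Uroots_ge: "q + 1 \<le> card (Uroots q :: 'a set)"
proof -
  have "x ^ (q - 1) \<in> Uroots q" if "x \<noteq> 0" for x :: 'a
  proof -
    have "(q - 1) * (q + 1) + 1 = q * q"
      using q_ge_4 by (cases q) (auto simp: algebra_simps)
    then have "(x ^ (q - 1)) ^ (q + 1) * x = (x ^ q) ^ q"
      by (metis power_mult power_add power_one_right)
    then show ?thesis
      using that by (simp add: Uroots_def)
  qed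
  then have "UNIV - {0} \<subseteq> (\<Union>u\<in>Uroots q. {x::'a. x ^ (q - 1) = u})"
    by auto
  then have "card (UNIV - {0::'a}) \<le> card (\<Union>u\<in>Uroots q. {x::'a. x ^ (q - 1) = u})"
    by (intro card_mono) simp_all
  also have "\<dots> \<le> (\<Sum>u\<in>Uroots q. card {x::'a. x ^ (q - 1) = u})"
    by (intro card_UN_le) simp
  also have "\<dots> \<le> (\<Sum>u\<in>(Uroots q :: 'a set). q - 1)"
    using q_ge_4 by (intro sum_mono card_power_eq_le) simp
  finally have "(q + 1) * (q - 1) \<le> card (Uroots q :: 'a set) * (q - 1)"
    using card_UNIV q_ge_4 by (simp add: card_Diff_singleton power2_eq_square algebra_simps)
  then show ?thesis
    using q_ge_4 mult_le_cancel2[of "q + 1" "q - 1"] by simp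
qed

lemma quadratic_eq_0_on_Uroots:
  assumes "\<forall>u\<in>Uroots q. \<alpha> * u ^ 2 + \<beta> * u + (\<gamma>::'a) = 0"
  shows "\<alpha> = 0 \<and> \<beta> = 0 \<and> \<gamma> = 0"
  using quadratic_eq_0_on_3_points[OF finite _ assms] card_Uroots_ge q_ge_4 by simp

lemma power_sum_power_q:
  fixes v :: "'a \<Rightarrow> 'a"
  assumes "\<forall>u\<in>Uroots q. v u ^ q = v u" and "i + j = q + 1"
  shows "(\<Sum>u\<in>Uroots q. v u * u ^ i) ^ q = (\<Sum>u\<in>Uroots q. v u * u ^ j)"
proof -
  have "(v u * u ^ i) ^ q = v u * u ^ j" if u: "u \<in> Uroots q" for u
  proof -
    have "u ^ j * u ^ i = 1"
      using u assms(2) by (simp add: Uroots_def add.commute flip: power_add)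
    then have "u ^ j = 1 / u ^ i"
      using Uroots_nonzero[OF u] by (simp add: field_simps)
    moreover have "(u ^ i) ^ q = 1 / u ^ i"
      by (metis power_mult mult.commute power_one_over power_q_Uroots[OF u])
    ultimately show ?thesis
      using u assms(1) by (simp add: power_mult_distrib)
  qed
  then show ?thesis
    by (simp add: power_q_sum)
qed

lemma mem_subfield_subcode_dual_C35I:
  fixes v :: "'a \<Rightarrow> 'a"
  assumes "v \<in> vecs q" "\<forall>u\<in>Uroots q. v u \<in> subGF q"
    and "(\<Sum>u\<in>Uroots q. v u * u ^ 3) = 0" "(\<Sum>u\<in>Uroots q. v u * u ^ 5) = 0"
  shows "v \<in> subfield_subcode q (dual_code q (C35 q))"
proof -
  have conj: "\<forall>u\<in>Uroots q. v u ^ q = v u"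
    using assms(2) by (simp add: subGF_def)
  have "(\<Sum>u\<in>Uroots q. v u * u ^ 3) ^ q = (\<Sum>u\<in>Uroots q. v u * u ^ (q - 2))"
    and "(\<Sum>u\<in>Uroots q. v u * u ^ 5) ^ q = (\<Sum>u\<in>Uroots q. v u * u ^ (q - 4))"
    using q_ge_4 by (intro power_sum_power_q[OF conj]; simp)+
  then have "(\<Sum>u\<in>Uroots q. v u * u ^ (q - 2)) = 0" "(\<Sum>u\<in>Uroots q. v u * u ^ (q - 4)) = 0"
    using assms(3,4) q_ge_4 by (simp_all add: power_0_left)
  then have "v \<in> dual_code q (C35 q)"
    using assms(1,3,4) by (intro mem_dual_C35I) auto
  then show ?thesis
    using assms(2) by (simp add: subfield_subcode_def)
qed

section \<open>The stabiliser of the unit circle and the code\<close>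

(* Multiplied by u, the equation N (a u + b) = N (c u + d) becomes a quadratic in u. *)
lemma mobius_coeffs_if_maps_Uroots:
  fixes a b c d :: 'a
  assumes "\<forall>u\<in>Uroots q. c * u + d \<noteq> 0 \<and> (a * u + b) / (c * u + d) \<in> Uroots q"
  shows "a * b ^ q = c * d ^ q" "a * a ^ q + c * c ^ q = b * b ^ q + d * d ^ q"
    "b * a ^ q = d * c ^ q"
proof -
  have "(a * b ^ q + c * d ^ q) * u ^ 2 + (a * a ^ q + b * b ^ q + c * c ^ q + d * d ^ q) * u
      + (b * a ^ q + d * c ^ q) = 0" if u: "u \<in> Uroots q" for u
  proof -
    have "u \<noteq> 0" "u ^ q = 1 / u"
      using Uroots_nonzero power_q_Uroots u by auto
    have "((a * u + b) / (c * u + d)) ^ (q + 1) = 1"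
      using assms u by (simp add: Uroots_def)
    then have "(a * u + b) ^ (q + 1) = (c * u + d) ^ (q + 1)"
      using assms u by (simp add: power_divide)
    then have "(a * u + b) * (a ^ q / u + b ^ q) + (c * u + d) * (c ^ q / u + d ^ q) = 0"
      by (simp add: power_Suc2 power_q_add power_mult_distrib \<open>u ^ q = 1 / u\<close> add_eq_0_iff_eq
          mult.commute)
    moreover have "(a * b ^ q + c * d ^ q) * u ^ 2
        + (a * a ^ q + b * b ^ q + c * c ^ q + d * d ^ q) * u + (b * a ^ q + d * c ^ q)
      = u * ((a * u + b) * (a ^ q / u + b ^ q) + (c * u + d) * (c ^ q / u + d ^ q))"
      using \<open>u \<noteq> 0\<close> by (simp add: field_simps power2_eq_square)
    ultimately show ?thesis
      by simp
  qed
  then have "a * b ^ q + c * d ^ q = 0 \<and> a * a ^ q + b * b ^ q + c * c ^ q + d * d ^ q = 0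
      \<and> b * a ^ q + d * c ^ q = 0"
    by (intro quadratic_eq_0_on_Uroots) blast
  then show "a * b ^ q = c * d ^ q" "a * a ^ q + c * c ^ q = b * b ^ q + d * d ^ q"
    "b * a ^ q = d * c ^ q"
    by (simp_all add: add_eq_0_iff_eq flip: add_eq_0_iff_eq[of "a * a ^ q + c * c ^ q"] add.assoc)
      (simp_all add: ac_simps)
qed

lemma mobius_coeffs_proportional:
  fixes a b c d :: 'a
  assumes "a * b ^ q = c * d ^ q" "a * a ^ q + c * c ^ q = b * b ^ q + d * d ^ q"
    "b * a ^ q = d * c ^ q" and det: "a * d + b * c \<noteq> 0"
  obtains \<mu> where "\<mu> \<noteq> 0" "c = \<mu> * b ^ q" "d = \<mu> * a ^ q"
proof -
  define n where "n = a * a ^ q + c * c ^ q"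
  have "c * n = c * b * b ^ q + d * (c * d ^ q)"
    by (simp add: n_def assms(2) algebra_simps)
  also have "\<dots> = (a * d + b * c) * b ^ q"
    by (simp add: assms(1)[symmetric] algebra_simps)
  finally have cn: "c * n = (a * d + b * c) * b ^ q" .
  have "d * n = a * d * a ^ q + c * (d * c ^ q)"
    by (simp add: n_def algebra_simps)
  also have "\<dots> = (a * d + b * c) * a ^ q"
    by (simp add: assms(3)[symmetric] algebra_simps)
  finally have dn: "d * n = (a * d + b * c) * a ^ q" .
  have "n \<noteq> 0"
  proof
    assume "n = 0"
    then have "a ^ q = 0" "b ^ q = 0"
      using cn dn det by auto
    then show False
      using det by simp
  qed
  show ?thesis
  proof
    show "(a * d + b * c) / n \<noteq> 0"
      using \<open>n \<noteq> 0\<close> det by simp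
    show "c = (a * d + b * c) / n * b ^ q" "d = (a * d + b * c) / n * a ^ q"
      using cn dn \<open>n \<noteq> 0\<close> by (simp_all add: field_simps)
  qed
qed

lemma Stab_on_Uroots:
  assumes "\<pi> \<in> Stab q" and \<pi>_Some: "\<forall>u\<in>Uroots q. \<pi> (Some u) = Some (g u)"
  obtains a b \<mu> :: 'a where "\<mu> \<noteq> 0"
    "\<forall>u\<in>Uroots q. a * u + b \<noteq> 0 \<and> g u = (a * u + b) / (\<mu> * u * (a * u + b) ^ q)"
proof -
  obtain a b c d :: 'a where \<pi>: "\<pi> = mobius a b c d" and det: "a * d + b * c \<noteq> 0"
    using assms(1) by (auto simp: Stab_def PGL2_def minus_CHAR_2[OF CHAR_eq_2])
  have g: "c * u + d \<noteq> 0 \<and> g u = (a * u + b) / (c * u + d)" "g u \<in> Uroots q"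
    if u: "u \<in> Uroots q" for u
  proof -
    show "c * u + d \<noteq> 0 \<and> g u = (a * u + b) / (c * u + d)"
      using \<pi>_Some u by (auto simp: \<pi> mobius_def split: if_splits)
    have "Some (g u) \<in> \<pi> ` Some ` Uroots q"
      using \<pi>_Some u by (metis imageI)
    then show "g u \<in> Uroots q"
      using assms(1) by (auto simp: Stab_def)
  qed
  then have "\<forall>u\<in>Uroots q. c * u + d \<noteq> 0 \<and> (a * u + b) / (c * u + d) \<in> Uroots q"
    by metis
  then obtain \<mu> where "\<mu> \<noteq> 0" "c = \<mu> * b ^ q" "d = \<mu> * a ^ q"
    using mobius_coeffs_proportional[OF mobius_coeffs_if_maps_Uroots det] by blast
  then have "c * u + d = \<mu> * u * (a * u + b) ^ q" if u: "u \<in> Uroots q" for u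
    using Uroots_nonzero[OF u]
    by (simp add: power_q_add power_mult_distrib power_q_Uroots[OF u] field_simps)
  moreover have "a * u + b \<noteq> 0" if "u \<in> Uroots q" for u
    using g[OF that] Uroots_nonzero by fastforce
  ultimately show ?thesis
    using g \<open>\<mu> \<noteq> 0\<close> by (intro that[where a = a and b = b and \<mu> = \<mu>]) auto
qed

lemma Uroots_power_q_minus:
  fixes u :: 'a
  assumes "u \<in> Uroots q"
  shows "u ^ (q - 2) = 1 / u ^ 3" "u ^ (q - 4) = 1 / u ^ 5"
proof -
  have "u ^ (q - 2) * u ^ 3 = 1" "u ^ (q - 4) * u ^ 5 = 1"
    using assms q_ge_4 by (simp_all add: Uroots_def flip: power_add)
  then show "u ^ (q - 2) = 1 / u ^ 3" "u ^ (q - 4) = 1 / u ^ 5"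
    using Uroots_nonzero[OF assms] by (simp_all add: field_simps)
qed

lemma power_q_linear_Uroots:
  fixes a b u :: 'a
  assumes "u \<in> Uroots q"
  shows "(a * u + b) ^ q = a ^ q / u + b ^ q"
  by (simp add: power_q_add power_mult_distrib power_q_Uroots[OF assms])

lemma multiplier_times_cube_eq:
  fixes a b u \<mu> :: 'a
  assumes u: "u \<in> Uroots q" and "\<mu> \<noteq> 0" "a * u + b \<noteq> 0"
  shows "((a * u + b) ^ (q + 1)) ^ 5 * ((a * u + b) / (\<mu> * u * (a * u + b) ^ q)) ^ 3
    = a ^ 8 * (a ^ q) ^ 2 / \<mu> ^ 3 * u ^ 3 + b ^ 8 * (b ^ q) ^ 2 / \<mu> ^ 3 * u ^ (q - 2)
      + a ^ 8 * (b ^ q) ^ 2 / \<mu> ^ 3 * u ^ 5 + b ^ 8 * (a ^ q) ^ 2 / \<mu> ^ 3 * u ^ (q - 4)"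
proof -
  define N M where "N = a * u + b" and "M = (a * u + b) ^ q"
  have "u \<noteq> 0" "N \<noteq> 0" "M \<noteq> 0"
    using assms Uroots_nonzero by (auto simp: N_def M_def)
  have NM: "N ^ (q + 1) = M * N"
    by (simp add: N_def M_def)
  have "(N ^ (q + 1)) ^ 5 * (N / (\<mu> * u * M)) ^ 3 = N ^ 8 * M ^ 2 / (\<mu> ^ 3 * u ^ 3)"
    unfolding NM using \<open>M \<noteq> 0\<close> \<open>u \<noteq> 0\<close> \<open>\<mu> \<noteq> 0\<close> by (simp add: field_simps eval_nat_numeral)
  also have "N ^ 8 = a ^ 8 * u ^ 8 + b ^ 8"
    using power_2_power_add[of "a * u" b 3] by (simp add: N_def power_mult_distrib)
  also have "M ^ 2 = (a ^ q) ^ 2 / u ^ 2 + (b ^ q) ^ 2"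
    using power_2_power_add[of "a ^ q / u" "b ^ q" 1]
    by (simp add: M_def power_q_linear_Uroots[OF u] power_divide)
  finally show ?thesis
    unfolding Uroots_power_q_minus[OF u] N_def M_def using \<open>u \<noteq> 0\<close> \<open>\<mu> \<noteq> 0\<close>
    by (simp add: field_simps eval_nat_numeral)
qed

lemma multiplier_times_fifth_power_eq:
  fixes a b u \<mu> :: 'a
  assumes u: "u \<in> Uroots q" and "\<mu> \<noteq> 0" "a * u + b \<noteq> 0"
  shows "((a * u + b) ^ (q + 1)) ^ 5 * ((a * u + b) / (\<mu> * u * (a * u + b) ^ q)) ^ 5
    = a ^ 8 * b ^ 2 / \<mu> ^ 5 * u ^ 3 + a ^ 2 * b ^ 8 / \<mu> ^ 5 * u ^ (q - 2)
      + a ^ 10 / \<mu> ^ 5 * u ^ 5 + b ^ 10 / \<mu> ^ 5 * u ^ (q - 4)"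
proof -
  define N M where "N = a * u + b" and "M = (a * u + b) ^ q"
  have "u \<noteq> 0" "N \<noteq> 0" "M \<noteq> 0"
    using assms Uroots_nonzero by (auto simp: N_def M_def)
  have NM: "N ^ (q + 1) = M * N"
    by (simp add: N_def M_def)
  have "(N ^ (q + 1)) ^ 5 * (N / (\<mu> * u * M)) ^ 5 = N ^ 8 * N ^ 2 / (\<mu> ^ 5 * u ^ 5)"
    unfolding NM using \<open>M \<noteq> 0\<close> \<open>u \<noteq> 0\<close> \<open>\<mu> \<noteq> 0\<close> by (simp add: field_simps eval_nat_numeral)
  also have "N ^ 8 = a ^ 8 * u ^ 8 + b ^ 8"
    using power_2_power_add[of "a * u" b 3] by (simp add: N_def power_mult_distrib)
  also have "N ^ 2 = a ^ 2 * u ^ 2 + b ^ 2"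
    using power_2_power_add[of "a * u" b 1] by (simp add: N_def power_mult_distrib)
  finally show ?thesis
    unfolding Uroots_power_q_minus[OF u] N_def M_def using \<open>u \<noteq> 0\<close> \<open>\<mu> \<noteq> 0\<close>
    by (simp add: field_simps eval_nat_numeral)
qed

lemma multiplier_times_power_in_C35:
  fixes a b \<mu> :: 'a and g :: "'a \<Rightarrow> 'a"
  assumes "\<mu> \<noteq> 0" "j \<in> {3, 5}"
    and g: "\<forall>u\<in>Uroots q. a * u + b \<noteq> 0 \<and> g u = (a * u + b) / (\<mu> * u * (a * u + b) ^ q)"
  shows "\<exists>c\<in>C35 q. \<forall>u\<in>Uroots q. ((a * u + b) ^ (q + 1)) ^ 5 * g u ^ j = c u"
proof -
  have "\<exists>a3 b3 a5 b5. \<forall>u\<in>Uroots q. ((a * u + b) ^ (q + 1)) ^ 5 * g u ^ j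
      = a3 * u ^ 3 + b3 * u ^ (q - 2) + a5 * u ^ 5 + b5 * u ^ (q - 4)"
    using assms(2)
  proof
    assume "j = 3"
    then have "\<forall>u\<in>Uroots q. ((a * u + b) ^ (q + 1)) ^ 5 * g u ^ j
        = a ^ 8 * (a ^ q) ^ 2 / \<mu> ^ 3 * u ^ 3 + b ^ 8 * (b ^ q) ^ 2 / \<mu> ^ 3 * u ^ (q - 2)
          + a ^ 8 * (b ^ q) ^ 2 / \<mu> ^ 3 * u ^ 5 + b ^ 8 * (a ^ q) ^ 2 / \<mu> ^ 3 * u ^ (q - 4)"
      using g multiplier_times_cube_eq[OF _ \<open>\<mu> \<noteq> 0\<close>] by simp
    then show ?thesis
      by blast
  next
    assume "j \<in> {5}"
    then have "\<forall>u\<in>Uroots q. ((a * u + b) ^ (q + 1)) ^ 5 * g u ^ j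
        = a ^ 8 * b ^ 2 / \<mu> ^ 5 * u ^ 3 + a ^ 2 * b ^ 8 / \<mu> ^ 5 * u ^ (q - 2)
          + a ^ 10 / \<mu> ^ 5 * u ^ 5 + b ^ 10 / \<mu> ^ 5 * u ^ (q - 4)"
      using g multiplier_times_fifth_power_eq[OF _ \<open>\<mu> \<noteq> 0\<close>] by simp
    then show ?thesis
      by blast
  qed
  then obtain a3 b3 a5 b5 where "\<forall>u\<in>Uroots q. ((a * u + b) ^ (q + 1)) ^ 5 * g u ^ j
      = a3 * u ^ 3 + b3 * u ^ (q - 2) + a5 * u ^ 5 + b5 * u ^ (q - 4)"
    by blast
  from mem_C35_if_eq_on_Uroots[OF this] show ?thesis
    by (rule bexI[rotated]) simp
qed

lemma Stab_multiplier:
  assumes "\<pi> \<in> Stab q" and "\<forall>u\<in>Uroots q. \<pi> (Some u) = Some (g u)"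
  obtains \<rho> :: "'a \<Rightarrow> 'a" where "\<forall>u\<in>Uroots q. \<rho> u \<noteq> 0 \<and> \<rho> u \<in> subGF q"
    "\<forall>j\<in>{3, 5}. \<exists>c\<in>C35 q. \<forall>u\<in>Uroots q. \<rho> u * g u ^ j = c u"
proof -
  obtain a b \<mu> :: 'a where "\<mu> \<noteq> 0" and
    g: "\<forall>u\<in>Uroots q. a * u + b \<noteq> 0 \<and> g u = (a * u + b) / (\<mu> * u * (a * u + b) ^ q)"
    by (rule Stab_on_Uroots[OF assms])
  \<comment> \<open>Up to constants and powers of \<open>u\<close>, \<open>\<rho> u * g u ^ 3\<close> and \<open>\<rho> u * g u ^ 5\<close> are
    \<open>(a * u + b) ^ 8 * ((a * u + b) ^ q) ^ 2\<close> and \<open>(a * u + b) ^ 10\<close>, which expand into powers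
    \<open>u ^ 3, u ^ 5, u ^ (q - 2), u ^ (q - 4)\<close> by the Frobenius.\<close>
  define \<rho> where "\<rho> u = ((a * u + b) ^ (q + 1)) ^ 5" for u
  have "\<rho> u \<noteq> 0 \<and> \<rho> u \<in> subGF q" if "u \<in> Uroots q" for u
  proof -
    have "\<rho> u ^ q = (((a * u + b) ^ (q + 1)) ^ q) ^ 5"
      unfolding \<rho>_def by (metis power_mult mult.commute)
    also have "\<dots> = \<rho> u"
      by (simp only: \<rho>_def power_q_norm)
    finally show ?thesis
      using g that by (simp add: \<rho>_def subGF_def)
  qed
  moreover have "\<forall>j\<in>{3, 5}. \<exists>c\<in>C35 q. \<forall>u\<in>Uroots q. \<rho> u * g u ^ j = c u"
    unfolding \<rho>_def using multiplier_times_power_in_C35[OF \<open>\<mu> \<noteq> 0\<close> _ g] by blast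
  ultimately show ?thesis
    using that by blast
qed

lemma transport_mem_subfield_subcode_dual_C35:
  fixes v g \<rho> :: "'a \<Rightarrow> 'a"
  assumes v: "v \<in> subfield_subcode q (dual_code q (C35 q))"
    and g: "bij_betw g (Uroots q) (Uroots q)"
    and \<rho>: "\<forall>u\<in>Uroots q. \<rho> u \<in> subGF q"
    and multiplier: "\<forall>j\<in>{3, 5}. \<exists>c\<in>C35 q. \<forall>u\<in>Uroots q. \<rho> u * g u ^ j = c u"
  shows "transport q g \<rho> v \<in> subfield_subcode q (dual_code q (C35 q))"
proof (rule mem_subfield_subcode_dual_C35I)
  let ?v' = "transport q g \<rho> v"
  have v_GF: "\<forall>u\<in>Uroots q. v u \<in> subGF q" and v_dual: "v \<in> dual_code q (C35 q)"
    using v by (simp_all add: subfield_subcode_def)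
  have "(\<Sum>y\<in>Uroots q. ?v' y * y ^ j) = 0" if j: "j \<in> {3, 5}" for j
  proof -
    obtain c where "c \<in> C35 q" and c: "\<forall>u\<in>Uroots q. \<rho> u * g u ^ j = c u"
      using bspec[OF multiplier j] by blast
    have "(\<Sum>y\<in>Uroots q. ?v' y * y ^ j) = (\<Sum>u\<in>Uroots q. ?v' (g u) * g u ^ j)"
      using sum.reindex_bij_betw[OF g, of "\<lambda>y. ?v' y * y ^ j"] by simp
    also have "\<dots> = (\<Sum>u\<in>Uroots q. v u * c u)"
      using c by (intro sum.cong) (simp_all add: transport_image[OF g] flip: c)
    also have "\<dots> = 0"
      using v_dual \<open>c \<in> C35 q\<close> by (simp add: dual_code_def)
    finally show ?thesis .
  qed
  then show "(\<Sum>y\<in>Uroots q. ?v' y * y ^ 3) = 0" "(\<Sum>y\<in>Uroots q. ?v' y * y ^ 5) = 0"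
    by simp_all
  show "\<forall>y\<in>Uroots q. ?v' y \<in> subGF q"
    using \<rho> v_GF g by (simp add: transport_def subGF_def power_mult_distrib bij_betw_def inv_into_into)
  show "?v' \<in> vecs q"
    by (simp add: vecs_def transport_def)
qed

lemma invariant_blocks_subfield_subcode_dual_C35:
  "invariant q (blocks q k (subfield_subcode q (dual_code q (C35 q :: ('a \<Rightarrow> 'a) set))))"
  unfolding invariant_def
proof (intro ballI)
  let ?U = "Uroots q :: 'a set"
  let ?D = "subfield_subcode q (dual_code q (C35 q :: ('a \<Rightarrow> 'a) set))"
  fix B :: "'a set" and \<pi> :: "'a option \<Rightarrow> 'a option"
  assume "B \<in> blocks q k ?D" and \<pi>: "\<pi> \<in> Stab q"
  then obtain v where v: "v \<in> ?D" "wt q v = k" and B: "B = supp q v"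
    by (auto simp: blocks_def)
  have "\<pi> ` Some ` ?U = Some ` ?U"
    using \<pi> by (simp add: Stab_def)
  then obtain g where g: "bij_betw g ?U ?U"
    and \<pi>_Some: "\<forall>u\<in>?U. \<pi> (Some u) = Some (g u)"
    using obtain_restriction_to_Some_image[OF _ finite] by blast
  obtain \<rho> :: "'a \<Rightarrow> 'a" where \<rho>: "\<forall>u\<in>?U. \<rho> u \<noteq> 0 \<and> \<rho> u \<in> subGF q"
    and multiplier: "\<forall>j\<in>{3, 5}. \<exists>c\<in>C35 q. \<forall>u\<in>?U. \<rho> u * g u ^ j = c u"
    by (rule Stab_multiplier[OF \<pi> \<pi>_Some])
  define v' where "v' = transport q g \<rho> v"
  have "v' \<in> ?D"
    using transport_mem_subfield_subcode_dual_C35[OF v(1) g _ multiplier] \<rho> by (simp add: v'_def)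
  have "B \<subseteq> ?U"
    by (auto simp: B supp_def)
  have "supp q v' = g ` B"
    using supp_transport[OF g] \<rho> B by (simp add: v'_def)
  then have "act \<pi> B = supp q v'"
    using act_eq_image[of B \<pi> g] \<pi>_Some \<open>B \<subseteq> ?U\<close> by blast
  moreover have "wt q v' = k"
    using v(2) \<open>supp q v' = g ` B\<close> inj_on_subset[OF bij_betw_imp_inj_on[OF g] \<open>B \<subseteq> ?U\<close>]
    by (simp add: wt_def B card_image)
  ultimately show "act \<pi> B \<in> blocks q k ?D"
    using \<open>v' \<in> ?D\<close> by (auto simp: blocks_def)
qed

section \<open>Three-transitivity of the stabiliser\<close>

(* The cross ratio sending x1, x2, x3 to 0, 1, infinity (signs do not matter in characteristic 2),
   and below its inverse for y1, y2, y3. *)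
lemma cross_ratio_in_subGF:
  fixes x\<^sub>1 x\<^sub>2 x\<^sub>3 z :: 'a
  assumes "x\<^sub>1 \<in> Uroots q" "x\<^sub>2 \<in> Uroots q" "x\<^sub>3 \<in> Uroots q" "z \<in> Uroots q"
  shows "(((x\<^sub>2 + x\<^sub>3) * (z + x\<^sub>1)) / ((x\<^sub>2 + x\<^sub>1) * (z + x\<^sub>3))) ^ q
    = ((x\<^sub>2 + x\<^sub>3) * (z + x\<^sub>1)) / ((x\<^sub>2 + x\<^sub>1) * (z + x\<^sub>3))"
proof -
  have "x\<^sub>1 \<noteq> 0" "x\<^sub>2 \<noteq> 0" "x\<^sub>3 \<noteq> 0" "z \<noteq> 0"
    using assms Uroots_nonzero by auto
  have "(((x\<^sub>2 + x\<^sub>3) * (z + x\<^sub>1)) / ((x\<^sub>2 + x\<^sub>1) * (z + x\<^sub>3))) ^ q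
      = ((1 / x\<^sub>2 + 1 / x\<^sub>3) * (1 / z + 1 / x\<^sub>1)) / ((1 / x\<^sub>2 + 1 / x\<^sub>1) * (1 / z + 1 / x\<^sub>3))"
    using assms by (simp add: power_divide power_mult_distrib power_q_add power_q_Uroots)
  also have "\<dots> = ((x\<^sub>2 + x\<^sub>3) * (z + x\<^sub>1)) / ((x\<^sub>2 + x\<^sub>1) * (z + x\<^sub>3))"
    using \<open>x\<^sub>1 \<noteq> 0\<close> \<open>x\<^sub>2 \<noteq> 0\<close> \<open>x\<^sub>3 \<noteq> 0\<close> \<open>z \<noteq> 0\<close>
    by (simp add: divide_simps) (simp add: algebra_simps)
  finally show ?thesis .
qed

lemma inverse_cross_ratio_in_Uroots:
  fixes y\<^sub>1 y\<^sub>2 y\<^sub>3 r :: 'a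
  assumes y: "y\<^sub>1 \<in> Uroots q" "y\<^sub>2 \<in> Uroots q" "y\<^sub>3 \<in> Uroots q"
    and distinct: "y\<^sub>1 \<noteq> y\<^sub>2" "y\<^sub>2 \<noteq> y\<^sub>3" "y\<^sub>1 \<noteq> y\<^sub>3" and "r ^ q = r"
  shows "(y\<^sub>2 + y\<^sub>1) * r + (y\<^sub>2 + y\<^sub>3) \<noteq> 0"
    and "(y\<^sub>3 * (y\<^sub>2 + y\<^sub>1) * r + y\<^sub>1 * (y\<^sub>2 + y\<^sub>3)) / ((y\<^sub>2 + y\<^sub>1) * r + (y\<^sub>2 + y\<^sub>3)) \<in> Uroots q"
proof -
  define num den where "num = y\<^sub>3 * (y\<^sub>2 + y\<^sub>1) * r + y\<^sub>1 * (y\<^sub>2 + y\<^sub>3)"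
    and "den = (y\<^sub>2 + y\<^sub>1) * r + (y\<^sub>2 + y\<^sub>3)"
  have "y\<^sub>1 \<noteq> 0" "y\<^sub>2 \<noteq> 0" "y\<^sub>3 \<noteq> 0"
    using y Uroots_nonzero by auto
  have num_q: "num ^ q = den / (y\<^sub>1 * y\<^sub>2 * y\<^sub>3)" and den_q: "den ^ q = num / (y\<^sub>1 * y\<^sub>2 * y\<^sub>3)"
    using y \<open>r ^ q = r\<close> \<open>y\<^sub>1 \<noteq> 0\<close> \<open>y\<^sub>2 \<noteq> 0\<close> \<open>y\<^sub>3 \<noteq> 0\<close>
    by (simp_all add: num_def den_def power_mult_distrib power_q_add power_q_Uroots field_simps)
  have "den \<noteq> 0"
  proof
    assume "den = 0"
    then have "num = 0"
      using num_q q_ge_4 by simp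
    have r: "(y\<^sub>2 + y\<^sub>1) * r = y\<^sub>2 + y\<^sub>3"
      using \<open>den = 0\<close> by (simp add: den_def add_eq_0_iff_eq)
    have "num = y\<^sub>3 * ((y\<^sub>2 + y\<^sub>1) * r) + y\<^sub>1 * (y\<^sub>2 + y\<^sub>3)"
      by (simp add: num_def ac_simps)
    also have "\<dots> = (y\<^sub>2 + y\<^sub>3) * (y\<^sub>3 + y\<^sub>1)"
      unfolding r by (simp add: algebra_simps)
    finally show False
      using \<open>num = 0\<close> distinct by (simp add: add_eq_0_iff_eq)
  qed
  moreover have "num \<noteq> 0"
    using den_q \<open>den \<noteq> 0\<close> q_ge_4 by auto
  moreover have "(num / den) ^ (q + 1) = (num ^ q / den ^ q) * (num / den)"
    by (simp add: power_divide mult.commute)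
  ultimately show "den \<noteq> 0" "num / den \<in> Uroots q"
    unfolding Uroots_def num_q den_q using \<open>y\<^sub>1 \<noteq> 0\<close> \<open>y\<^sub>2 \<noteq> 0\<close> \<open>y\<^sub>3 \<noteq> 0\<close>
    by (simp_all add: field_simps)
qed

lemma cross_ratio_composite_in_Uroots:
  fixes x\<^sub>1 x\<^sub>2 x\<^sub>3 y\<^sub>1 y\<^sub>2 y\<^sub>3 z :: 'a
  defines "P \<equiv> (x\<^sub>2 + x\<^sub>3) * (z + x\<^sub>1)" and "Q \<equiv> (x\<^sub>2 + x\<^sub>1) * (z + x\<^sub>3)"
  assumes x: "x\<^sub>1 \<in> Uroots q" "x\<^sub>2 \<in> Uroots q" "x\<^sub>3 \<in> Uroots q"
    and x_distinct: "x\<^sub>1 \<noteq> x\<^sub>2" "x\<^sub>2 \<noteq> x\<^sub>3" "x\<^sub>1 \<noteq> x\<^sub>3"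
    and y: "y\<^sub>1 \<in> Uroots q" "y\<^sub>2 \<in> Uroots q" "y\<^sub>3 \<in> Uroots q"
    and y_distinct: "y\<^sub>1 \<noteq> y\<^sub>2" "y\<^sub>2 \<noteq> y\<^sub>3" "y\<^sub>1 \<noteq> y\<^sub>3"
    and z: "z \<in> Uroots q"
  shows "(y\<^sub>2 + y\<^sub>1) * P + (y\<^sub>2 + y\<^sub>3) * Q \<noteq> 0
    \<and> (y\<^sub>3 * (y\<^sub>2 + y\<^sub>1) * P + y\<^sub>1 * (y\<^sub>2 + y\<^sub>3) * Q) / ((y\<^sub>2 + y\<^sub>1) * P + (y\<^sub>2 + y\<^sub>3) * Q)
      \<in> Uroots q"
proof (cases "z = x\<^sub>3")
  case True
  then have "Q = 0" "P \<noteq> 0" "y\<^sub>2 + y\<^sub>1 \<noteq> 0"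
    using x_distinct y_distinct by (auto simp: P_def Q_def add_eq_0_iff_eq)
  then show ?thesis
    using y by simp
next
  case False
  then have "Q \<noteq> 0"
    using x_distinct by (simp add: Q_def add_eq_0_iff_eq)
  define r where "r = P / Q"
  have "r ^ q = r"
    unfolding r_def P_def Q_def by (rule cross_ratio_in_subGF[OF x z])
  have "(y\<^sub>2 + y\<^sub>1) * P + (y\<^sub>2 + y\<^sub>3) * Q = Q * ((y\<^sub>2 + y\<^sub>1) * r + (y\<^sub>2 + y\<^sub>3))"
    "y\<^sub>3 * (y\<^sub>2 + y\<^sub>1) * P + y\<^sub>1 * (y\<^sub>2 + y\<^sub>3) * Q = Q * (y\<^sub>3 * (y\<^sub>2 + y\<^sub>1) * r + y\<^sub>1 * (y\<^sub>2 + y\<^sub>3))"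
    using \<open>Q \<noteq> 0\<close> by (simp_all add: r_def field_simps)
  then show ?thesis
    using inverse_cross_ratio_in_Uroots[OF y y_distinct \<open>r ^ q = r\<close>] \<open>Q \<noteq> 0\<close> by simp
qed

lemma Stab_three_transitive:
  fixes x\<^sub>1 x\<^sub>2 x\<^sub>3 y\<^sub>1 y\<^sub>2 y\<^sub>3 :: 'a
  assumes x: "x\<^sub>1 \<in> Uroots q" "x\<^sub>2 \<in> Uroots q" "x\<^sub>3 \<in> Uroots q"
    and x_distinct: "x\<^sub>1 \<noteq> x\<^sub>2" "x\<^sub>2 \<noteq> x\<^sub>3" "x\<^sub>1 \<noteq> x\<^sub>3"
    and y: "y\<^sub>1 \<in> Uroots q" "y\<^sub>2 \<in> Uroots q" "y\<^sub>3 \<in> Uroots q"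
    and y_distinct: "y\<^sub>1 \<noteq> y\<^sub>2" "y\<^sub>2 \<noteq> y\<^sub>3" "y\<^sub>1 \<noteq> y\<^sub>3"
  obtains \<pi> where "\<pi> \<in> Stab q"
    "\<pi> (Some x\<^sub>1) = Some y\<^sub>1" "\<pi> (Some x\<^sub>2) = Some y\<^sub>2" "\<pi> (Some x\<^sub>3) = Some y\<^sub>3"
proof -
  define A B C D where "A = y\<^sub>3 * (y\<^sub>2 + y\<^sub>1)" and "B = y\<^sub>1 * (y\<^sub>2 + y\<^sub>3)"
    and "C = y\<^sub>2 + y\<^sub>1" and "D = y\<^sub>2 + y\<^sub>3"
  \<comment> \<open>the product of the matrices of the two cross ratio maps\<close>
  define a b c d where "a = A * (x\<^sub>2 + x\<^sub>3) + B * (x\<^sub>2 + x\<^sub>1)"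
    and "b = A * x\<^sub>1 * (x\<^sub>2 + x\<^sub>3) + B * x\<^sub>3 * (x\<^sub>2 + x\<^sub>1)"
    and "c = C * (x\<^sub>2 + x\<^sub>3) + D * (x\<^sub>2 + x\<^sub>1)"
    and "d = C * x\<^sub>1 * (x\<^sub>2 + x\<^sub>3) + D * x\<^sub>3 * (x\<^sub>2 + x\<^sub>1)"
  have lin: "a * z + b = A * ((x\<^sub>2 + x\<^sub>3) * (z + x\<^sub>1)) + B * ((x\<^sub>2 + x\<^sub>1) * (z + x\<^sub>3))"
    "c * z + d = C * ((x\<^sub>2 + x\<^sub>3) * (z + x\<^sub>1)) + D * ((x\<^sub>2 + x\<^sub>1) * (z + x\<^sub>3))" for z
    by (simp_all add: a_def b_def c_def d_def algebra_simps)
  have maps: "\<forall>z\<in>Uroots q. c * z + d \<noteq> 0 \<and> (a * z + b) / (c * z + d) \<in> Uroots q"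
    unfolding lin A_def B_def C_def D_def
    using cross_ratio_composite_in_Uroots[OF x x_distinct y y_distinct] by blast
  have "a * d - b * c = (A * D - B * C) * ((x\<^sub>2 + x\<^sub>3) * x\<^sub>3 * (x\<^sub>2 + x\<^sub>1) - x\<^sub>1 * (x\<^sub>2 + x\<^sub>3) * (x\<^sub>2 + x\<^sub>1))"
    by (simp add: a_def b_def c_def d_def algebra_simps)
  also have "\<dots> = (y\<^sub>2 + y\<^sub>1) * (y\<^sub>2 + y\<^sub>3) * (y\<^sub>3 - y\<^sub>1) * ((x\<^sub>2 + x\<^sub>3) * (x\<^sub>2 + x\<^sub>1) * (x\<^sub>3 - x\<^sub>1))"
    by (simp add: A_def B_def C_def D_def algebra_simps)
  finally have "a * d - b * c \<noteq> 0"
    using x_distinct y_distinct by (simp add: add_eq_0_iff_eq)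
  then have "mobius a b c d \<in> Stab q"
    using mobius_image_Some_image[OF _ finite maps] by (auto simp: Stab_def PGL2_def)
  moreover have "mobius a b c d (Some z) = Some ((a * z + b) / (c * z + d))" if "z \<in> Uroots q" for z
    using maps that by (simp add: mobius_def)
  moreover have "(a * x\<^sub>1 + b) / (c * x\<^sub>1 + d) = y\<^sub>1" "(a * x\<^sub>3 + b) / (c * x\<^sub>3 + d) = y\<^sub>3"
    using x_distinct y_distinct
    by (simp_all add: lin A_def B_def C_def D_def add_eq_0_iff_eq add.commute[of x\<^sub>3])
  moreover have "(a * x\<^sub>2 + b) / (c * x\<^sub>2 + d) = y\<^sub>2"
  proof -
    have "a * x\<^sub>2 + b = (x\<^sub>2 + x\<^sub>3) * (x\<^sub>2 + x\<^sub>1) * y\<^sub>2 * (y\<^sub>3 + y\<^sub>1)"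
      "c * x\<^sub>2 + d = (x\<^sub>2 + x\<^sub>3) * (x\<^sub>2 + x\<^sub>1) * (y\<^sub>3 + y\<^sub>1)"
      unfolding lin by (simp_all add: A_def B_def C_def D_def algebra_simps two_eq_0)
    then show ?thesis
      using x_distinct y_distinct by (simp add: add_eq_0_iff_eq)
  qed
  ultimately show ?thesis
    using that x by metis
qed

lemma is_3_design_blocks_subfield_subcode_dual_C35:
  fixes v :: "'a \<Rightarrow> 'a" and k :: nat
  defines "\<B> \<equiv> blocks q k (subfield_subcode q (dual_code q (C35 q :: ('a \<Rightarrow> 'a) set)))"
  assumes "v \<in> subfield_subcode q (dual_code q (C35 q))" "wt q v = k" "3 \<le> k"
  shows "is_t_design 3 (Uroots q) \<B>"
proof (rule is_t_design_if_t_homogeneous)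
  show "\<forall>B\<in>\<B>. B \<subseteq> Uroots q" "supp q v \<in> \<B>" "3 \<le> card (supp q v)"
    using assms by (auto simp: \<B>_def blocks_def supp_def wt_def)
next
  fix T T' :: "'a set"
  assume "T \<subseteq> Uroots q" "T' \<subseteq> Uroots q" "card T = 3" "card T' = 3"
  then obtain x\<^sub>1 x\<^sub>2 x\<^sub>3 y\<^sub>1 y\<^sub>2 y\<^sub>3 where T: "T = {x\<^sub>1, x\<^sub>2, x\<^sub>3}" "x\<^sub>1 \<noteq> x\<^sub>2" "x\<^sub>2 \<noteq> x\<^sub>3" "x\<^sub>1 \<noteq> x\<^sub>3"
    and T': "T' = {y\<^sub>1, y\<^sub>2, y\<^sub>3}" "y\<^sub>1 \<noteq> y\<^sub>2" "y\<^sub>2 \<noteq> y\<^sub>3" "y\<^sub>1 \<noteq> y\<^sub>3"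
    and "{x\<^sub>1, x\<^sub>2, x\<^sub>3} \<subseteq> Uroots q" "{y\<^sub>1, y\<^sub>2, y\<^sub>3} \<subseteq> Uroots q"
    by (metis card_3_iff)
  then obtain \<pi> where \<pi>: "\<pi> \<in> Stab q"
    "\<pi> (Some x\<^sub>1) = Some y\<^sub>1" "\<pi> (Some x\<^sub>2) = Some y\<^sub>2" "\<pi> (Some x\<^sub>3) = Some y\<^sub>3"
    using Stab_three_transitive[of x\<^sub>1 x\<^sub>2 x\<^sub>3 y\<^sub>1 y\<^sub>2 y\<^sub>3] by auto
  then have "\<pi> ` Some ` Uroots q = Some ` Uroots q"
    by (simp add: Stab_def)
  then obtain g where g: "bij_betw g (Uroots q) (Uroots q)"
    and \<pi>_Some: "\<forall>u\<in>Uroots q. \<pi> (Some u) = Some (g u)"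
    using obtain_restriction_to_Some_image[OF _ finite] by blast
  have "g ` T = T'"
    using \<pi> \<pi>_Some T T' \<open>{x\<^sub>1, x\<^sub>2, x\<^sub>3} \<subseteq> Uroots q\<close> by auto
  moreover have "g ` B \<in> \<B>" if "B \<in> \<B>" for B
  proof -
    have "B \<subseteq> Uroots q"
      using that by (auto simp: \<B>_def blocks_def supp_def)
    then have "act \<pi> B = g ` B"
      using \<pi>_Some by (intro act_eq_image) blast
    then show ?thesis
      using invariant_blocks_subfield_subcode_dual_C35 that \<pi>(1) unfolding \<B>_def invariant_def
      by metis
  qed
  ultimately show "\<exists>g. inj_on g (Uroots q) \<and> (\<forall>B\<in>\<B>. g ` B \<in> \<B>) \<and> g ` T = T'"
    using g by (auto simp: bij_betw_def)
qed simp

end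

theorem theorem24:
  fixes m k q :: nat
  assumes "m \<ge> 2" and "q = 2 ^ m"
    and "card (UNIV :: 'a::{field,finite} set) = q ^ 2"
    and "1 \<le> k" and "k \<le> q + 1"
    and "\<exists>v \<in> subfield_subcode q (dual_code q (C35 q :: ('a \<Rightarrow> 'a) set)). wt q v = k"
  shows "invariant q (blocks q k (subfield_subcode q (dual_code q (C35 q :: ('a \<Rightarrow> 'a) set))))
    \<and> (k > 3 \<longrightarrow> is_t_design 3 (Uroots q :: 'a set)
          (blocks q k (subfield_subcode q (dual_code q (C35 q :: ('a \<Rightarrow> 'a) set)))))"
  using invariant_blocks_subfield_subcode_dual_C35[OF assms(1-3)]
    is_3_design_blocks_subfield_subcode_dual_C35[OF assms(1-3)] assms(6)
  by fastforce

end
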